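(* Let $S$ be a shape graph, let $t\in\Gamma$, and let $T=\{t'\in\Gamma\mid t=t'\}$ be the set of types equivalent to $t$ w.r.t. $S$. Then for every shape graph $S'$ with $S'\equiv S$ and every context $(u,a)\in\Gamma\times\Sigma$: $$\sum_{s\in T}\mathsf{minarity}_S(u,a,s)=\sum_{s\in T}\mathsf{minarity}_{S'}(u,a,s).$$
   Context: Fix finite sets $\Sigma$ (edge labels) and $\Gamma$ (types). Graphs and shape graphs. A graph is $G=(N_G,E_G)$ with $E_G\subseteq N_G\times\Sigma\times N_G$. A shape graph is a function $\mathsf{arity}_S:\Gamma\times\Sigma\times\Gamma\to\{[0;0],[0;1],[1;1],[0;\infty],[1;\infty]\}$. $\mathsf{minarity}_S(u,a,s)$ denotes the lower bound of the interval $\mathsf{arity}_S(u,a,s)$. Satisfaction. A node $n$ satisfies type $t$ w.r.t. $S$ iff there is $\lambda$ from the outgoing edges of $n$ to $\Gamma$ such that (1) each edge's target satisfies $\lambda(e)$, and (2) for all $a\in\Sigma$ and $s\in\Gamma$, the number of outgoing $a$-edges $e$ with $\lambda(e)=s$ lies in $\mathsf{arity}_S(t,a,s)$. (This recursion is read as the largest such relation, as usual for shape expression schemas.) Typings and languages. $\mathit{typing}_G(n)$ is the set of types that $n$ satisfies. $L(S)$ is the set of finite graphs, equipped with their typing, in which every node has at least one type. $S\equiv S'$ iff $L(S)=L(S')$. Type equivalence. $t=t'$ w.r.t. $S$ means: for every $G\in L(S)$ and $n\in N_G$, $t\in\mathit{typing}_G(n)$ iff $t'\in\mathit{typing}_G(n)$.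 A context is a pair $(u,a)\in\Gamma\times\Sigma$. *)

theory Defs
  imports Main
begin

datatype interval = I00 | I01 | I11 | I0Inf | I1Inf

fun in_interval :: "nat \<Rightarrow> interval \<Rightarrow> bool" where
  "in_interval k I00 = (k = 0)"
| "in_interval k I01 = (k \<le> 1)"
| "in_interval k I11 = (k = 1)"
| "in_interval k I0Inf = True"
| "in_interval k I1Inf = (1 \<le> k)"

fun lower :: "interval \<Rightarrow> nat" where
  "lower I00 = 0" | "lower I01 = 0" | "lower I11 = 1" | "lower I0Inf = 0" | "lower I1Inf = 1"

text \<open>A shape graph over edge labels 'l and types 't: the arity function.\<close>
type_synonym ('t, 'l) shape = "'t \<Rightarrow> 'l \<Rightarrow> 't \<Rightarrow> interval"

definition minarity :: "('t, 'l) shape \<Rightarrow> 't \<Rightarrow> 'l \<Rightarrow> 't \<Rightarrow> nat" where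
  "minarity S u a s = lower (S u a s)"

text \<open>Graphs: nodes are natural numbers (every finite graph is isomorphic to one of these).\<close>
type_synonym 'l graph = "nat set \<times> (nat \<times> 'l \<times> nat) set"

definition nodes :: "'l graph \<Rightarrow> nat set" where "nodes G = fst G"
definition edges :: "'l graph \<Rightarrow> (nat \<times> 'l \<times> nat) set" where "edges G = snd G"

definition finite_graph :: "'l graph \<Rightarrow> bool" where
  "finite_graph G \<longleftrightarrow> finite (nodes G) \<and>
     (\<forall>(n, a, m) \<in> edges G. n \<in> nodes G \<and> m \<in> nodes G)"

definition out_edges :: "'l graph \<Rightarrow> nat \<Rightarrow> (nat \<times> 'l \<times> nat) set" where
  "out_edges G n = {e \<in> edges G. fst e = n}"

definition edge_label :: "nat \<times> 'l \<times> nat \<Rightarrow> 'l" where "edge_label e = fst (snd e)"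
definition edge_target :: "nat \<times> 'l \<times> nat \<Rightarrow> nat" where "edge_target e = snd (snd e)"

definition sat_step :: "('t, 'l) shape \<Rightarrow> 'l graph \<Rightarrow> (nat \<times> 't) set \<Rightarrow> (nat \<times> 't) set" where
  "sat_step S G R = {(n, t). n \<in> nodes G \<and>
     (\<exists>lam :: nat \<times> 'l \<times> nat \<Rightarrow> 't.
        (\<forall>e \<in> out_edges G n. (edge_target e, lam e) \<in> R) \<and>
        (\<forall>a s. in_interval (card {e \<in> out_edges G n. edge_label e = a \<and> lam e = s}) (S t a s)))}"

definition satisfies :: "('t, 'l) shape \<Rightarrow> 'l graph \<Rightarrow> (nat \<times> 't) set" where
  "satisfies S G = gfp (sat_step S G)"

definition typing :: "('t, 'l) shape \<Rightarrow> 'l graph \<Rightarrow> nat \<Rightarrow> 't set" where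
  "typing S G n = {t. (n, t) \<in> satisfies S G}"

definition lang :: "('t, 'l) shape \<Rightarrow> ('l graph \<times> (nat \<Rightarrow> 't set)) set" where
  "lang S = {(G, typing S G) | G. finite_graph G \<and> (\<forall>n \<in> nodes G. typing S G n \<noteq> {})}"

definition shape_equiv :: "('t, 'l) shape \<Rightarrow> ('t, 'l) shape \<Rightarrow> bool" where
  "shape_equiv S S' \<longleftrightarrow> lang S = lang S'"

definition type_eq :: "('t, 'l) shape \<Rightarrow> 't \<Rightarrow> 't \<Rightarrow> bool" where
  "type_eq S t t' \<longleftrightarrow> (\<forall>G \<in> fst ` lang S. \<forall>n \<in> nodes G.
      (t \<in> typing S G n \<longleftrightarrow> t' \<in> typing S G n))"

end

theory Submission
  imports Defs "HOL-Library.Countable"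
begin

(* Write s <= t (type_le S s t) when, in every graph of L(S), each node of type s also has type t.
  The labelling witnessing that a node has type u sends at least minarity_S(u,a,s) of its a-edges
  to nodes of type s, and these have type t whenever s <= t; so the node has at least
  sum_{s <= t} minarity_S(u,a,s) a-successors of type t. The bound is attained by a fresh root
  joined, by exactly the mandatory edges of u, to disjoint copies of graphs in L(S) in which the
  target chosen for s has type s, and type t only if s <= t. Hence the sums over the principal
  down-sets of <= are determined by L(S), as is <= itself. In a finite preorder, equal sums over
  all principal down-sets give equal sums over all down-closed sets (split off the class of a
  maximal element), hence over every equivalence class, such as T. *)

lemma ex_maximal_in_finite_preorder:
  fixes le :: "'a \<Rightarrow> 'a \<Rightarrow> bool"
  assumes "reflp le" "transp le" and "finite A" "A \<noteq> {}"
  shows "\<exists>t \<in> A. \<forall>x \<in> A. le t x \<longrightarrow> le x t"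
proof -
  have "asymp_on A (\<lambda>x y. le x y \<and> \<not> le y x)" by (auto intro: asymp_onI)
  moreover have "transp_on A (\<lambda>x y. le x y \<and> \<not> le y x)"
    using \<open>transp le\<close> unfolding transp_def transp_on_def by blast
  ultimately obtain t where "t \<in> A" and "\<forall>x \<in> A. x \<noteq> t \<longrightarrow> \<not> (le t x \<and> \<not> le x t)"
    using Finite_Set.bex_max_element[OF assms(3) _ _ assms(4)] by blast
  then have "le x t" if "x \<in> A" "le t x" for x
    using that reflpD[OF \<open>reflp le\<close>, of t] by (cases "x = t") auto
  then show ?thesis using \<open>t \<in> A\<close> by blast
qed

lemma sum_eq_on_down_closed:
  fixes le :: "'a \<Rightarrow> 'a \<Rightarrow> bool" and f g :: "'a \<Rightarrow> 'b::cancel_comm_monoid_add"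
  assumes refl: "\<And>x. le x x" and trans: "\<And>x y z. le x y \<Longrightarrow> le y z \<Longrightarrow> le x z"
    and down_sets: "\<And>x. sum f {s. le s x} = sum g {s. le s x}"
    and "finite A" and down_closed: "\<And>x s. x \<in> A \<Longrightarrow> le s x \<Longrightarrow> s \<in> A"
  shows "sum f A = sum g A"
  using \<open>finite A\<close> down_closed
proof (induction A rule: finite_psubset_induct)
  case (psubset A)
  show ?case
  proof (cases "A = {}")
    case False
    have "reflp le" "transp le"
      using refl trans by (blast intro: reflpI transpI)+
    then have "\<exists>t \<in> A. \<forall>x \<in> A. le t x \<longrightarrow> le x t"
      using psubset.hyps(1) False by (rule ex_maximal_in_finite_preorder)
    then obtain t where "t \<in> A" and maximal: "\<forall>x \<in> A. le t x \<longrightarrow> le x t" ..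
    define D where "D = {s. le s t}"
    define A' where "A' = {x \<in> A. \<not> le t x}"
    define B where "B = {s. le s t \<and> \<not> le t s}"
    have "D \<subseteq> A" using psubset.prems \<open>t \<in> A\<close> unfolding D_def by blast
    then have "A = A' \<union> D" and "A' \<inter> D = B" using maximal unfolding A'_def B_def D_def by auto
    then have "sum f A + sum f B = sum f A' + sum f D" "sum g A + sum g B = sum g A' + sum g D"
      using psubset.hyps(1) \<open>D \<subseteq> A\<close> by (metis finite_Un sum.union_inter)+
    moreover have "sum f A' = sum g A'"
    proof (rule psubset.IH)
      show "A' \<subset> A" using \<open>t \<in> A\<close> refl[of t] unfolding A'_def by blast
      show "s \<in> A'" if "x \<in> A'" "le s x" for x s
        using that psubset.prems trans[of t s x] unfolding A'_def by blast
    qed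
    moreover have "sum f B = sum g B"
    proof (rule psubset.IH)
      show "B \<subset> A" using \<open>t \<in> A\<close> \<open>D \<subseteq> A\<close> refl[of t] unfolding B_def D_def by blast
      show "s \<in> B" if "x \<in> B" "le s x" for x s
        using that trans[of s x t] trans[of t s x] unfolding B_def by blast
    qed
    ultimately have "sum f A + sum f B = sum g A + sum f B"
      using down_sets[of t] unfolding D_def by simp
    then show ?thesis by simp
  qed simp
qed

lemma sum_eq_on_equivalence_class:
  fixes le :: "'a \<Rightarrow> 'a \<Rightarrow> bool" and f g :: "'a \<Rightarrow> 'b::cancel_comm_monoid_add"
  assumes refl: "\<And>x. le x x" and trans: "\<And>x y z. le x y \<Longrightarrow> le y z \<Longrightarrow> le x z"
    and down_sets: "\<And>x. sum f {s. le s x} = sum g {s. le s x}"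
    and finite: "finite {s. le s t}"
  shows "sum f {s. le s t \<and> le t s} = sum g {s. le s t \<and> le t s}"
proof -
  define B where "B = {s. le s t \<and> \<not> le t s}"
  have split: "sum h {s. le s t} = sum h B + sum h {s. le s t \<and> le t s}" for h :: "'a \<Rightarrow> 'b"
  proof -
    have "{s. le s t} = B \<union> {s. le s t \<and> le t s}" unfolding B_def by blast
    moreover have "finite B" "finite {s. le s t \<and> le t s}" using finite unfolding B_def by simp_all
    moreover have "B \<inter> {s. le s t \<and> le t s} = {}" unfolding B_def by blast
    ultimately show ?thesis by (metis sum.union_disjoint)
  qed
  have "sum f B = sum g B"
  proof (rule sum_eq_on_down_closed[OF refl trans down_sets])
    show "finite B" using finite unfolding B_def by simp
    show "s \<in> B" if "x \<in> B" "le s x" for x s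
      using that trans[of s x t] trans[of t s x] unfolding B_def by blast
  qed
  then show ?thesis using split[of f] split[of g] down_sets[of t] by simp
qed

lemma in_interval_lower: "in_interval (lower I) I"
  by (cases I) auto

lemma lower_le_if_in_interval: "in_interval k I \<Longrightarrow> lower I \<le> k"
  by (cases I) auto

lemma minarity_le_1: "minarity S u a s \<le> 1"
  unfolding minarity_def by (cases "S u a s") auto

lemma sum_minarity_eq_card:
  assumes "finite A"
  shows "(\<Sum>s \<in> A. minarity S u a s) = card {s \<in> A. minarity S u a s = 1}"
proof -
  have "minarity S u a s = of_bool (minarity S u a s = 1)" for s
    using minarity_le_1[of S u a s] by (cases "minarity S u a s = 1") auto
  then have "(\<Sum>s \<in> A. minarity S u a s) = (\<Sum>s \<in> A. of_bool (minarity S u a s = 1))"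
    by (rule sum.cong[OF refl])
  also have "\<dots> = card {s \<in> A. minarity S u a s = 1}"
    using \<open>finite A\<close> by (simp add: Int_def)
  finally show ?thesis .
qed

lemma mono_sat_step: "mono (sat_step S G)"
  unfolding mono_def sat_step_def by blast

lemma satisfies_unfold: "satisfies S G = sat_step S G (satisfies S G)"
  unfolding satisfies_def by (rule gfp_unfold[OF mono_sat_step])

lemma satisfies_coinduct: "R \<subseteq> sat_step S G R \<Longrightarrow> R \<subseteq> satisfies S G"
  unfolding satisfies_def by (rule gfp_upperbound)

definition valid_labelling ::
  "('t, 'l) shape \<Rightarrow> 'l graph \<Rightarrow> (nat \<times> 't) set \<Rightarrow> nat \<Rightarrow> 't \<Rightarrow> (nat \<times> 'l \<times> nat \<Rightarrow> 't) \<Rightarrow> bool"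
where
  "valid_labelling S G R n t lam \<longleftrightarrow>
     (\<forall>e \<in> out_edges G n. (edge_target e, lam e) \<in> R) \<and>
     (\<forall>a s. in_interval (card {e \<in> out_edges G n. edge_label e = a \<and> lam e = s}) (S t a s))"

lemma sat_step_iff:
  "(n, t) \<in> sat_step S G R \<longleftrightarrow> n \<in> nodes G \<and> (\<exists>lam. valid_labelling S G R n t lam)"
  unfolding sat_step_def valid_labelling_def by simp

lemma typing_iff:
  "t \<in> typing S G n \<longleftrightarrow> n \<in> nodes G \<and> (\<exists>lam. valid_labelling S G (satisfies S G) n t lam)"
  unfolding typing_def by (subst satisfies_unfold) (simp add: sat_step_iff)

lemma satisfies_in_nodes: "(n, t) \<in> satisfies S G \<Longrightarrow> n \<in> nodes G"
  by (subst (asm) satisfies_unfold) (simp add: sat_step_iff)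

lemma graph_in_lang_iff:
  "G \<in> fst ` lang S \<longleftrightarrow> finite_graph G \<and> (\<forall>n \<in> nodes G. typing S G n \<noteq> {})"
proof -
  have "fst ` lang S = {G. finite_graph G \<and> (\<forall>n \<in> nodes G. typing S G n \<noteq> {})}"
    unfolding lang_def by (auto simp: image_Collect)
  then show ?thesis by simp
qed

lemma edge_target_in_nodes:
  "finite_graph G \<Longrightarrow> e \<in> out_edges G n \<Longrightarrow> edge_target e \<in> nodes G"
  unfolding finite_graph_def out_edges_def edge_target_def by auto

lemma finite_out_edges:
  fixes G :: "'l::finite graph"
  assumes "finite_graph G"
  shows "finite (out_edges G n)"
proof (rule finite_subset)
  show "out_edges G n \<subseteq> nodes G \<times> UNIV \<times> nodes G"
    using assms unfolding finite_graph_def out_edges_def by auto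
  show "finite (nodes G \<times> (UNIV :: 'l set) \<times> nodes G)"
    using assms unfolding finite_graph_def by simp
qed

lemma edge_label_simp [simp]: "edge_label (x, b, y) = b"
  by (simp add: edge_label_def)

lemma edge_target_simp [simp]: "edge_target (x, b, y) = y"
  by (simp add: edge_target_def)

definition map_edge :: "(nat \<Rightarrow> nat) \<Rightarrow> nat \<times> 'l \<times> nat \<Rightarrow> nat \<times> 'l \<times> nat" where
  "map_edge f = (\<lambda>(x, b, y). (f x, b, f y))"

lemma map_edge_simps [simp]:
  "fst (map_edge f e) = f (fst e)"
  "edge_label (map_edge f e) = edge_label e"
  "edge_target (map_edge f e) = f (edge_target e)"
  by (cases e; simp add: map_edge_def edge_label_def edge_target_def)+

lemma inj_map_edge: "inj f \<Longrightarrow> inj (map_edge f)"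
  unfolding inj_def map_edge_def by auto

lemma valid_labelling_map_edge:
  assumes "finite_graph G" "inj f" and out: "out_edges H (f n) = map_edge f ` out_edges G n"
  shows "valid_labelling S H R (f n) t lam \<longleftrightarrow>
    valid_labelling S G {(x, s). x \<in> nodes G \<and> (f x, s) \<in> R} n t (lam \<circ> map_edge f)"
proof -
  have inj_on: "inj_on (map_edge f) A" for A
    using inj_map_edge[OF \<open>inj f\<close>] by (rule inj_on_subset) simp
  moreover have "{e \<in> out_edges H (f n). edge_label e = a \<and> lam e = s}
      = map_edge f ` {e \<in> out_edges G n. edge_label e = a \<and> lam (map_edge f e) = s}" for a s
    unfolding out by auto
  ultimately have "card {e \<in> out_edges H (f n). edge_label e = a \<and> lam e = s}
      = card {e \<in> out_edges G n. edge_label e = a \<and> lam (map_edge f e) = s}" for a s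
    by (simp add: card_image[OF inj_on])
  moreover have "(\<forall>e \<in> out_edges H (f n). (edge_target e, lam e) \<in> R) \<longleftrightarrow>
      (\<forall>e \<in> out_edges G n. edge_target e \<in> nodes G \<and> (f (edge_target e), lam (map_edge f e)) \<in> R)"
    unfolding out using edge_target_in_nodes[OF \<open>finite_graph G\<close>] by auto
  ultimately show ?thesis unfolding valid_labelling_def by simp
qed

lemma sat_step_map_edge:
  assumes "finite_graph G" "inj f" "n \<in> nodes G" "f n \<in> nodes H"
    and out: "out_edges H (f n) = map_edge f ` out_edges G n"
  shows "(f n, t) \<in> sat_step S H R \<longleftrightarrow> (n, t) \<in> sat_step S G {(x, s). x \<in> nodes G \<and> (f x, s) \<in> R}"
proof -
  note labelling_iff = valid_labelling_map_edge[OF assms(1,2) out]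
  have "(\<exists>lam. valid_labelling S H R (f n) t lam) \<longleftrightarrow>
      (\<exists>lam. valid_labelling S G {(x, s). x \<in> nodes G \<and> (f x, s) \<in> R} n t lam)"
  proof
    assume "\<exists>lam. valid_labelling S H R (f n) t lam"
    then show "\<exists>lam. valid_labelling S G {(x, s). x \<in> nodes G \<and> (f x, s) \<in> R} n t lam"
      unfolding labelling_iff by blast
  next
    assume "\<exists>lam. valid_labelling S G {(x, s). x \<in> nodes G \<and> (f x, s) \<in> R} n t lam"
    then obtain lam where lam: "valid_labelling S G {(x, s). x \<in> nodes G \<and> (f x, s) \<in> R} n t lam" ..
    have "lam \<circ> inv (map_edge f) \<circ> map_edge f = lam"
      by (rule ext) (simp add: inv_f_f[OF inj_map_edge[OF \<open>inj f\<close>]])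
    then have "valid_labelling S H R (f n) t (lam \<circ> inv (map_edge f))"
      unfolding labelling_iff using lam by simp
    then show "\<exists>lam. valid_labelling S H R (f n) t lam" by blast
  qed
  then show ?thesis using assms(3,4) by (simp add: sat_step_iff)
qed

lemma typing_embedding:
  assumes "finite_graph G" "inj f"
    and emb: "\<And>n. n \<in> nodes G \<Longrightarrow> f n \<in> nodes H \<and> out_edges H (f n) = map_edge f ` out_edges G n"
    and "n \<in> nodes G"
  shows "typing S H (f n) = typing S G n"
proof -
  have transfer: "(f x, s) \<in> sat_step S H R \<longleftrightarrow> (x, s) \<in> sat_step S G {(x, s). x \<in> nodes G \<and> (f x, s) \<in> R}"
    if "x \<in> nodes G" for x s R
    using emb[OF that] by (intro sat_step_map_edge[OF assms(1,2) that]) auto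
  define image_sat where "image_sat = {(f x, s) | x s. (x, s) \<in> satisfies S G}"
  define preimage_sat where "preimage_sat = {(x, s). x \<in> nodes G \<and> (f x, s) \<in> satisfies S H}"
  have "image_sat \<subseteq> sat_step S H image_sat"
  proof
    fix p assume "p \<in> image_sat"
    then obtain x s where p: "p = (f x, s)" and xs: "(x, s) \<in> satisfies S G"
      unfolding image_sat_def by blast
    have "satisfies S G \<subseteq> {(x, s). x \<in> nodes G \<and> (f x, s) \<in> image_sat}"
      unfolding image_sat_def by (auto dest: satisfies_in_nodes)
    then have "(x, s) \<in> sat_step S G {(x, s). x \<in> nodes G \<and> (f x, s) \<in> image_sat}"
      using xs monoD[OF mono_sat_step] satisfies_unfold by blast
    with transfer[OF satisfies_in_nodes[OF xs]] show "p \<in> sat_step S H image_sat"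
      unfolding p by (rule iffD2)
  qed
  moreover have "preimage_sat \<subseteq> sat_step S G preimage_sat"
  proof
    fix p assume "p \<in> preimage_sat"
    then obtain x s where p: "p = (x, s)" and "x \<in> nodes G" and "(f x, s) \<in> satisfies S H"
      unfolding preimage_sat_def by blast
    then have "(f x, s) \<in> sat_step S H (satisfies S H)" by (subst (asm) satisfies_unfold)
    with transfer[OF \<open>x \<in> nodes G\<close>] show "p \<in> sat_step S G preimage_sat"
      unfolding p preimage_sat_def by (rule iffD1)
  qed
  ultimately have "image_sat \<subseteq> satisfies S H" "preimage_sat \<subseteq> satisfies S G"
    by (simp_all add: satisfies_coinduct)
  then show ?thesis
    using \<open>n \<in> nodes G\<close> unfolding typing_def image_sat_def preimage_sat_def by blast
qed

lemma sat_step_mandatory_edges: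
  fixes S :: "('t, 'l) shape"
  assumes "n \<in> nodes G" "inj g"
    and out: "out_edges G n = {(n, b, g s) | b s. minarity S u b s = 1}"
    and "\<And>s. (g s, s) \<in> R"
  shows "(n, u) \<in> sat_step S G R"
proof -
  define lam where "lam e = inv g (edge_target e)" for e :: "nat \<times> 'l \<times> nat"
  have lam_simp: "lam (n, b, g s) = s" for b s
    unfolding lam_def using \<open>inj g\<close> by simp
  have "{e \<in> out_edges G n. edge_label e = a \<and> lam e = s}
      = (if minarity S u a s = 1 then {(n, a, g s)} else {})" for a s
    unfolding out by (auto simp: lam_simp)
  then have "card {e \<in> out_edges G n. edge_label e = a \<and> lam e = s} = minarity S u a s" for a s
    using minarity_le_1[of S u a s] by simp
  then have "valid_labelling S G R n u lam"
    unfolding valid_labelling_def out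
    using assms(4) in_interval_lower by (auto simp: lam_simp minarity_def)
  then show ?thesis using \<open>n \<in> nodes G\<close> by (auto simp: sat_step_iff)
qed

lemma typing_if_mandatory_edges:
  fixes S :: "('t, 'l) shape"
  assumes "n \<in> nodes G" "inj g"
    and out: "out_edges G n = {(n, b, g s) | b s. minarity S u b s = 1}"
    and typed: "\<And>s. s \<in> typing S G (g s)"
  shows "u \<in> typing S G n"
proof -
  define R where "R = insert (n, u) (satisfies S G)"
  have "satisfies S G \<subseteq> sat_step S G R"
    using monoD[OF mono_sat_step, of "satisfies S G" R] satisfies_unfold unfolding R_def by blast
  moreover have "(n, u) \<in> sat_step S G R"
    using typed by (intro sat_step_mandatory_edges[OF assms(1-3)]) (simp add: R_def typing_def)
  ultimately have "R \<subseteq> satisfies S G"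
    by (intro satisfies_coinduct) (simp add: R_def)
  then show ?thesis unfolding R_def typing_def by blast
qed

lemma ex_node_of_type:
  fixes S :: "('t::finite, 'l) shape"
  shows "\<exists>G \<in> fst ` lang S. \<exists>n \<in> nodes G. s \<in> typing S G n"
proof -
  define G :: "'l graph" where
    "G = (range (to_nat :: 't \<Rightarrow> nat), {(to_nat x, b, to_nat y) | x b y. minarity S x b y = 1})"
  have out: "out_edges G (to_nat x) = {(to_nat x, b, to_nat y) | b y. minarity S x b y = 1}" for x
    unfolding out_edges_def G_def edges_def by auto
  define R :: "(nat \<times> 't) set" where "R = range (\<lambda>x. (to_nat x, x))"
  have "(to_nat x, x) \<in> sat_step S G R" for x
    by (rule sat_step_mandatory_edges[OF _ inj_to_nat out]) (auto simp: G_def nodes_def R_def)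
  then have "R \<subseteq> satisfies S G"
    by (intro satisfies_coinduct) (auto simp: R_def)
  then have typed: "x \<in> typing S G (to_nat x)" for x
    unfolding typing_def R_def by blast
  have "finite_graph G"
    unfolding finite_graph_def G_def nodes_def edges_def by auto
  then have "G \<in> fst ` lang S"
    unfolding graph_in_lang_iff using typed by (auto simp: G_def nodes_def)
  moreover have "to_nat s \<in> nodes G" by (simp add: G_def nodes_def)
  ultimately show ?thesis using typed by blast
qed

definition type_le :: "('t, 'l) shape \<Rightarrow> 't \<Rightarrow> 't \<Rightarrow> bool" where
  "type_le S s t \<longleftrightarrow> (\<forall>G \<in> fst ` lang S. \<forall>n \<in> nodes G. s \<in> typing S G n \<longrightarrow> t \<in> typing S G n)"

definition out_edges_to_type :: "('t, 'l) shape \<Rightarrow> 'l graph \<Rightarrow> nat \<Rightarrow> 'l \<Rightarrow> 't \<Rightarrow> (nat \<times> 'l \<times> nat) set"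
where
  "out_edges_to_type S G n a t = {e \<in> out_edges G n. edge_label e = a \<and> t \<in> typing S G (edge_target e)}"

lemma sum_minarity_le_card_out_edges_to_type:
  fixes S :: "('t::finite, 'l::finite) shape"
  assumes "G \<in> fst ` lang S" and "u \<in> typing S G n"
  shows "(\<Sum>s | type_le S s t. minarity S u a s) \<le> card (out_edges_to_type S G n a t)"
proof -
  have "finite_graph G" using assms(1) by (simp add: graph_in_lang_iff)
  then have finite_out: "finite (out_edges G n)" by (rule finite_out_edges)
  from assms(2) obtain lam where "valid_labelling S G (satisfies S G) n u lam"
    unfolding typing_iff by blast
  then have targets: "\<And>e. e \<in> out_edges G n \<Longrightarrow> lam e \<in> typing S G (edge_target e)"
    and counts: "\<And>s. minarity S u a s \<le> card {e \<in> out_edges G n. edge_label e = a \<and> lam e = s}"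
    unfolding valid_labelling_def typing_def minarity_def by (auto intro: lower_le_if_in_interval)
  have "(\<Sum>s | type_le S s t. minarity S u a s)
      \<le> (\<Sum>s | type_le S s t. card {e \<in> out_edges G n. edge_label e = a \<and> lam e = s})"
    by (rule sum_mono) (rule counts)
  also have "\<dots> = card (\<Union>s \<in> {s. type_le S s t}. {e \<in> out_edges G n. edge_label e = a \<and> lam e = s})"
    using finite_out by (intro card_UN_disjoint[symmetric]) auto
  also have "\<dots> \<le> card (out_edges_to_type S G n a t)"
  proof (rule card_mono)
    show "finite (out_edges_to_type S G n a t)"
      using finite_out unfolding out_edges_to_type_def by simp
    show "(\<Union>s \<in> {s. type_le S s t}. {e \<in> out_edges G n. edge_label e = a \<and> lam e = s})
        \<subseteq> out_edges_to_type S G n a t"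
      using targets assms(1) edge_target_in_nodes[OF \<open>finite_graph G\<close>]
      unfolding out_edges_to_type_def type_le_def by blast
  qed
  finally show ?thesis .
qed

lemma ex_nodes_separating_types:
  fixes S :: "('t::finite, 'l) shape"
  obtains Gs :: "'t \<Rightarrow> 'l graph" and ns :: "'t \<Rightarrow> nat"
  where "\<And>s. Gs s \<in> fst ` lang S" "\<And>s. ns s \<in> nodes (Gs s)" "\<And>s. s \<in> typing S (Gs s) (ns s)"
    "\<And>s. t \<in> typing S (Gs s) (ns s) \<longleftrightarrow> type_le S s t"
proof -
  have "\<exists>G n. G \<in> fst ` lang S \<and> n \<in> nodes G \<and> s \<in> typing S G n \<and> (t \<in> typing S G n \<longleftrightarrow> type_le S s t)"
    for s
    using ex_node_of_type[of S s] unfolding type_le_def by blast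
  then show ?thesis using that by metis
qed

definition tag :: "'i::countable \<Rightarrow> nat \<Rightarrow> nat" where
  "tag i x = Suc (prod_encode (to_nat i, x))"

lemma tag_eq_iff [simp]: "tag i x = tag j y \<longleftrightarrow> i = j \<and> x = y"
  unfolding tag_def by (auto simp: prod_encode_eq)

lemma tag_neq_0 [simp]: "tag i x \<noteq> 0"
  unfolding tag_def by simp

lemma inj_tag: "inj (tag i)"
  by (rule injI) simp

definition rooted_union :: "('i::countable \<Rightarrow> 'l graph) \<Rightarrow> ('l \<times> nat) set \<Rightarrow> 'l graph" where
  "rooted_union Gs root_succs =
     (insert 0 (\<Union>i. tag i ` nodes (Gs i)),
      (\<Union>i. map_edge (tag i) ` edges (Gs i)) \<union> (\<lambda>(b, y). (0, b, y)) ` root_succs)"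

lemma nodes_rooted_union: "nodes (rooted_union Gs R) = insert 0 (\<Union>i. tag i ` nodes (Gs i))"
  by (simp add: rooted_union_def nodes_def)

lemma tag_in_nodes_rooted_union: "x \<in> nodes (Gs i) \<Longrightarrow> tag i x \<in> nodes (rooted_union Gs R)"
  unfolding nodes_rooted_union by (intro insertI2 UN_I[where a = i] UNIV_I imageI)

lemma edges_rooted_union:
  "edges (rooted_union Gs R) = (\<Union>i. map_edge (tag i) ` edges (Gs i)) \<union> (\<lambda>(b, y). (0, b, y)) ` R"
  by (simp add: rooted_union_def edges_def)

lemma out_edges_rooted_union_tag:
  "out_edges (rooted_union Gs R) (tag i x) = map_edge (tag i) ` out_edges (Gs i) x"
  unfolding out_edges_def edges_rooted_union by auto

lemma out_edges_rooted_union_root: "out_edges (rooted_union Gs R) 0 = (\<lambda>(b, y). (0, b, y)) ` R"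
  unfolding out_edges_def edges_rooted_union by auto

lemma finite_graph_rooted_union:
  fixes Gs :: "'i::{countable, finite} \<Rightarrow> 'l graph"
  assumes "\<And>i. finite_graph (Gs i)" and "snd ` R \<subseteq> nodes (rooted_union Gs R)"
  shows "finite_graph (rooted_union Gs R)"
proof -
  have "finite (nodes (rooted_union Gs R))"
    using assms(1) unfolding finite_graph_def nodes_rooted_union by simp
  moreover have "x \<in> nodes (rooted_union Gs R) \<and> y \<in> nodes (rooted_union Gs R)"
    if "(x, b, y) \<in> edges (rooted_union Gs R)" for x b y
    using that unfolding edges_rooted_union
  proof (elim UnE)
    assume "(x, b, y) \<in> (\<Union>i. map_edge (tag i) ` edges (Gs i))"
    then obtain i x' y' where "(x', b, y') \<in> edges (Gs i)" "x = tag i x'" "y = tag i y'"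
      unfolding map_edge_def by fast
    moreover have "x' \<in> nodes (Gs i)" "y' \<in> nodes (Gs i)"
      using \<open>(x', b, y') \<in> edges (Gs i)\<close> assms(1)[of i] unfolding finite_graph_def by auto
    ultimately show ?thesis by (simp add: tag_in_nodes_rooted_union)
  next
    assume "(x, b, y) \<in> (\<lambda>(b, y). (0, b, y)) ` R"
    then have "x = 0" "y \<in> snd ` R" by force+
    then show ?thesis
      using subsetD[OF assms(2)] by (simp add: nodes_rooted_union)
  qed
  ultimately show ?thesis unfolding finite_graph_def by auto
qed

lemma typing_rooted_union_tag:
  assumes "finite_graph (Gs i)" "x \<in> nodes (Gs i)"
  shows "typing S (rooted_union Gs R) (tag i x) = typing S (Gs i) x"
  by (rule typing_embedding[OF assms(1) inj_tag _ assms(2)])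
    (auto simp: nodes_rooted_union out_edges_rooted_union_tag)

lemma rooted_union_in_lang:
  fixes Gs :: "'i::{countable, finite} \<Rightarrow> 'l graph"
  assumes Gs: "\<And>i. Gs i \<in> fst ` lang S" and succs: "snd ` R \<subseteq> nodes (rooted_union Gs R)"
    and root: "typing S (rooted_union Gs R) 0 \<noteq> {}"
  shows "rooted_union Gs R \<in> fst ` lang S"
proof -
  have finite_Gs: "finite_graph (Gs i)" for i
    using Gs[of i] by (simp add: graph_in_lang_iff)
  have "typing S (rooted_union Gs R) n \<noteq> {}" if "n \<in> nodes (rooted_union Gs R)" for n
  proof -
    from that consider "n = 0" | i x where "x \<in> nodes (Gs i)" "n = tag i x"
      unfolding nodes_rooted_union by blast
    then show ?thesis
    proof cases
      case 1
      then show ?thesis using root by simp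
    next
      case 2
      have "typing S (Gs i) x \<noteq> {}"
        using 2(1) Gs[of i] unfolding graph_in_lang_iff by blast
      then show ?thesis
        unfolding 2(2) typing_rooted_union_tag[of Gs i x, OF finite_Gs 2(1)] .
    qed
  qed
  with finite_graph_rooted_union[OF finite_Gs succs] show ?thesis
    by (simp add: graph_in_lang_iff)
qed

lemma ex_node_card_out_edges_to_type_eq_sum_minarity:
  fixes S :: "('t::finite, 'l::finite) shape"
  shows "\<exists>G \<in> fst ` lang S. \<exists>n. u \<in> typing S G n \<and>
    card (out_edges_to_type S G n a t) = (\<Sum>s | type_le S s t. minarity S u a s)"
proof -
  obtain Gs ns where Gs_in_lang: "\<And>s. Gs s \<in> fst ` lang S" and ns: "\<And>s. ns s \<in> nodes (Gs s)"
    and typed: "\<And>s. s \<in> typing S (Gs s) (ns s)"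
    and separating: "\<And>s. t \<in> typing S (Gs s) (ns s) \<longleftrightarrow> type_le S s t"
    using ex_nodes_separating_types[of S t] by blast
  define g where "g s = tag s (ns s)" for s
  define root_succs where "root_succs = {(b, g s) | b s. minarity S u b s = 1}"
  define H where "H = rooted_union Gs root_succs"
  have "inj g" by (rule injI) (simp add: g_def)
  have typing_g: "typing S H (g s) = typing S (Gs s) (ns s)" for s
    using Gs_in_lang[of s] unfolding H_def g_def graph_in_lang_iff
    by (intro typing_rooted_union_tag[of Gs s, OF _ ns]) simp
  have out_root: "out_edges H 0 = {(0, b, g s) | b s. minarity S u b s = 1}"
    unfolding H_def root_succs_def out_edges_rooted_union_root by auto
  have root_typed: "u \<in> typing S H 0"
  proof (rule typing_if_mandatory_edges[OF _ \<open>inj g\<close> out_root])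
    show "0 \<in> nodes H" by (simp add: H_def nodes_rooted_union)
    show "s \<in> typing S H (g s)" for s using typed typing_g by simp
  qed
  have "g s \<in> nodes H" for s
    unfolding H_def g_def by (rule tag_in_nodes_rooted_union[OF ns])
  then have "snd ` root_succs \<subseteq> nodes H"
    unfolding root_succs_def by auto
  then have "H \<in> fst ` lang S"
    using root_typed unfolding H_def by (intro rooted_union_in_lang[OF Gs_in_lang]) auto
  have "out_edges_to_type S H 0 a t = (\<lambda>s. (0, a, g s)) ` {s \<in> {s. type_le S s t}. minarity S u a s = 1}"
    unfolding out_edges_to_type_def out_root by (auto simp: typing_g separating)
  moreover have "inj (\<lambda>s. (0 :: nat, a, g s))"
    using \<open>inj g\<close> by (simp add: inj_def)
  ultimately have "card (out_edges_to_type S H 0 a t) = card {s \<in> {s. type_le S s t}. minarity S u a s = 1}"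
    by (simp add: card_image inj_on_subset[OF _ subset_UNIV])
  also have "\<dots> = (\<Sum>s | type_le S s t. minarity S u a s)"
    by (simp add: sum_minarity_eq_card)
  finally show ?thesis using \<open>H \<in> fst ` lang S\<close> root_typed by blast
qed

lemma typing_eq_if_shape_equiv:
  assumes "shape_equiv S S'" and "G \<in> fst ` lang S"
  shows "typing S' G = typing S G"
proof -
  have "(G, typing S G) \<in> lang S"
    using assms(2)[unfolded graph_in_lang_iff] unfolding lang_def by blast
  then have "(G, typing S G) \<in> lang S'"
    using assms(1) by (simp add: shape_equiv_def)
  then obtain G' where "(G, typing S G) = (G', typing S' G')" unfolding lang_def by blast
  then show ?thesis by auto
qed

lemma type_le_eq_if_shape_equiv:
  assumes "shape_equiv S S'"
  shows "type_le S' = type_le S"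
  using assms typing_eq_if_shape_equiv[OF assms]
  unfolding type_le_def shape_equiv_def by (intro ext) auto

lemma sum_minarity_type_le_eq_if_shape_equiv:
  fixes S S' :: "('t::finite, 'l::finite) shape"
  assumes "shape_equiv S S'"
  shows "(\<Sum>s | type_le S s t. minarity S u a s) = (\<Sum>s | type_le S s t. minarity S' u a s)"
proof -
  have le: "(\<Sum>s | type_le S\<^sub>1 s t. minarity S\<^sub>2 u a s) \<le> (\<Sum>s | type_le S\<^sub>1 s t. minarity S\<^sub>1 u a s)"
    if equiv: "shape_equiv S\<^sub>1 S\<^sub>2" for S\<^sub>1 S\<^sub>2 :: "('t, 'l) shape"
  proof -
    obtain G n where G: "G \<in> fst ` lang S\<^sub>1" and u: "u \<in> typing S\<^sub>1 G n"
      and attained: "card (out_edges_to_type S\<^sub>1 G n a t) = (\<Sum>s | type_le S\<^sub>1 s t. minarity S\<^sub>1 u a s)"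
      using ex_node_card_out_edges_to_type_eq_sum_minarity[of S\<^sub>1 u a t] by blast
    have G': "G \<in> fst ` lang S\<^sub>2" using G equiv by (simp add: shape_equiv_def)
    have same_typing: "typing S\<^sub>2 G = typing S\<^sub>1 G" by (rule typing_eq_if_shape_equiv[OF equiv G])
    have "(\<Sum>s | type_le S\<^sub>2 s t. minarity S\<^sub>2 u a s) \<le> card (out_edges_to_type S\<^sub>2 G n a t)"
      using u unfolding same_typing[symmetric] by (rule sum_minarity_le_card_out_edges_to_type[OF G'])
    also have "out_edges_to_type S\<^sub>2 G n a t = out_edges_to_type S\<^sub>1 G n a t"
      unfolding out_edges_to_type_def same_typing ..
    finally show ?thesis
      unfolding attained type_le_eq_if_shape_equiv[OF equiv] .
  qed
  have "shape_equiv S' S" using assms by (simp add: shape_equiv_def)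
  from le[OF this] have "(\<Sum>s | type_le S s t. minarity S u a s) \<le> (\<Sum>s | type_le S s t. minarity S' u a s)"
    unfolding type_le_eq_if_shape_equiv[OF assms] .
  with le[OF assms] show ?thesis by (rule antisym[rotated])
qed

theorem proposition4:
  fixes S S' :: "('t::finite, 'l::finite) shape" and t u :: 't and a :: 'l
  assumes "shape_equiv S S'"
  shows "(\<Sum>s \<in> {t'. type_eq S t t'}. minarity S u a s)
       = (\<Sum>s \<in> {t'. type_eq S t t'}. minarity S' u a s)"
proof -
  have "{t'. type_eq S t t'} = {s. type_le S s t \<and> type_le S t s}"
    unfolding type_eq_def type_le_def by blast
  moreover have "type_le S x x" for x
    unfolding type_le_def by blast
  moreover have "type_le S x z" if "type_le S x y" "type_le S y z" for x y z
    using that unfolding type_le_def by blast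
  ultimately show ?thesis
    using sum_eq_on_equivalence_class[where le = "type_le S" and f = "minarity S u a" and g = "minarity S' u a"]
      sum_minarity_type_le_eq_if_shape_equiv[OF assms] by simp
qed

end
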